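(* Let $A$ be an atom and $\mathcal{H}_{pos}$ a finite set of atoms such that $\mathrm{Var}(\{A\}\cup\mathcal{H}_{pos})\cap\mathcal{U}=\emptyset$ and $A$ unifies with every $B\in\mathcal{H}_{pos}$. In the algorithm MUS on $A,\mathcal{H}_{pos}$, the loop of step (2) always terminates, and the following statement is an invariant of this loop: for each $A'\in\{A\}\cup\mathcal{H}_{pos}$ there exist $B\in\mathcal{B}$ and a substitution $\theta$ such that $A'\theta=B\theta$ and $\mathrm{Var}(\mathcal{B})\cap\mathrm{Dom}(\theta)=\emptyset$.
   Context: $\mathcal{U}$ is a fixed infinite set of special fresh variables. Disagreement pair: for atoms (or terms) $s,t$, subterms $s'$ of $s$ and $t'$ of $t$ occurring at the same position form a disagreement pair if the root symbols of $s'$ and $t'$ differ while all symbols on the path from that position up to the root coincide in $s$ and $t$; a disagreement pair occurs in a set of atoms $\mathcal{B}$ if it is a disagreement pair of two atoms of $\mathcal{B}$. A disagreement pair $t,t'$ is simple if one of the terms is a variable not occurring in the other and no variable of $\mathcal{U}$ occurs in $t,t'$. Algorithm MUS: (1) $\mathcal{B}:=\{A\}\cup\mathcal{H}_{pos}$. (2) While simple disagreement pairs occur in $\mathcal{B}$: nondeterministically choose a simple disagreement pair $X,t$ (or $t,X$), $X$ a variable, such that there is no other simple disagreement pair $X,t'$ (or $t',X$) in $\mathcal{B}$ with $t'$ a strict instance of $t$; set $\mathcal{B}:=\mathcal{B}\{X/t\}$. (3) While $|\mathcal{B}|\neq 1$: nondeterministically choose a disagreement pair $t,t'$ in $\mathcal{B}$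 and replace all occurrences of the disagreement pair $t,t'$ in $\mathcal{B}$ by one fresh variable of $\mathcal{U}$. (4) With $\mathcal{B}=\{B\}$, return $\theta$ with $A\theta=B$ and $\mathrm{Dom}(\theta)\subseteq\mathrm{Var}(A)$. *)

theory Defs
  imports Main
begin

text \<open>First-order terms; atoms are represented as terms whose root symbol is the predicate symbol.\<close>
datatype ('f, 'v) trm = Var 'v | Fun 'f "('f, 'v) trm list"

type_synonym ('f, 'v) subst = "'v \<Rightarrow> ('f, 'v) trm"

fun subst_apply :: "('f, 'v) trm \<Rightarrow> ('f, 'v) subst \<Rightarrow> ('f, 'v) trm" (infixl "\<cdot>" 67) where
  "Var x \<cdot> \<sigma> = \<sigma> x"
| "Fun f ts \<cdot> \<sigma> = Fun f (map (\<lambda>t. t \<cdot> \<sigma>) ts)"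

fun vars :: "('f, 'v) trm \<Rightarrow> 'v set" where
  "vars (Var x) = {x}"
| "vars (Fun f ts) = \<Union> (set (map vars ts))"

definition vars_set :: "('f, 'v) trm set \<Rightarrow> 'v set" where
  "vars_set Bs = \<Union> (vars ` Bs)"

definition subst_dom :: "('f, 'v) subst \<Rightarrow> 'v set" where
  "subst_dom \<sigma> = {x. \<sigma> x \<noteq> Var x}"

fun root :: "('f, 'v) trm \<Rightarrow> ('f \<times> nat) + 'v" where
  "root (Var x) = Inr x"
| "root (Fun f ts) = Inl (f, length ts)"

fun subt_at :: "('f, 'v) trm \<Rightarrow> nat list \<Rightarrow> ('f, 'v) trm option" where
  "subt_at t [] = Some t"
| "subt_at (Var x) (i # p) = None"
| "subt_at (Fun f ts) (i # p) = (if i < length ts then subt_at (ts ! i) p else None)"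

definition disagreement_pair :: "('f, 'v) trm \<Rightarrow> ('f, 'v) trm \<Rightarrow> ('f, 'v) trm \<Rightarrow> ('f, 'v) trm \<Rightarrow> bool" where
  "disagreement_pair s t u v \<longleftrightarrow>
     (\<exists>p. subt_at s p = Some u \<and> subt_at t p = Some v \<and> root u \<noteq> root v \<and>
          (\<forall>k < length p. map_option root (subt_at s (take k p)) = map_option root (subt_at t (take k p))))"

definition dp_in :: "('f, 'v) trm set \<Rightarrow> ('f, 'v) trm \<Rightarrow> ('f, 'v) trm \<Rightarrow> bool" where
  "dp_in Bs u v \<longleftrightarrow> (\<exists>s\<in>Bs. \<exists>t\<in>Bs. disagreement_pair s t u v)"

definition simple_dp :: "'v set \<Rightarrow> ('f, 'v) trm \<Rightarrow> ('f, 'v) trm \<Rightarrow> bool" where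
  "simple_dp U u v \<longleftrightarrow>
     ((\<exists>x. u = Var x \<and> x \<notin> vars v) \<or> (\<exists>x. v = Var x \<and> x \<notin> vars u)) \<and>
     (vars u \<union> vars v) \<inter> U = {}"

definition var_pair :: "'v set \<Rightarrow> ('f, 'v) trm set \<Rightarrow> 'v \<Rightarrow> ('f, 'v) trm \<Rightarrow> bool" where
  "var_pair U Bs x t \<longleftrightarrow>
     (dp_in Bs (Var x) t \<and> simple_dp U (Var x) t) \<or> (dp_in Bs t (Var x) \<and> simple_dp U t (Var x))"

definition is_instance :: "('f, 'v) trm \<Rightarrow> ('f, 'v) trm \<Rightarrow> bool" where
  "is_instance t' t \<longleftrightarrow> (\<exists>\<sigma>. t' = t \<cdot> \<sigma>)"

definition strict_instance :: "('f, 'v) trm \<Rightarrow> ('f, 'v) trm \<Rightarrow> bool" where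
  "strict_instance t' t \<longleftrightarrow> is_instance t' t \<and> \<not> is_instance t t'"

definition mus_step2 :: "'v set \<Rightarrow> ('f, 'v) trm set \<Rightarrow> ('f, 'v) trm set \<Rightarrow> bool" where
  "mus_step2 U Bs Bs' \<longleftrightarrow>
     (\<exists>x t. var_pair U Bs x t \<and>
            \<not> (\<exists>t'. var_pair U Bs x t' \<and> strict_instance t' t) \<and>
            Bs' = (\<lambda>s. s \<cdot> (Var(x := t))) ` Bs)"

end

theory Submission
  imports Defs
begin

text \<open>Each step of loop (2) replaces a variable X of \<open>\<B>\<close> by a term t that does not contain X and
  whose variables already occur in \<open>\<B>\<close>; so X disappears and the finite set \<open>Var(\<B>)\<close> shrinks,
  which gives termination. The step substitution is idempotent on the new variables, so a
  substitution \<open>\<theta>\<close> with \<open>A'\<theta> = B\<theta>\<close> fixing \<open>Var(\<B>)\<close> can be followed by the step substitution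
  to give one that unifies \<open>A'\<close> with the image of B and fixes the new \<open>Var(\<B>)\<close>.
  Neither argument needs the hypotheses on \<open>\<U>\<close> or the unifiability of A with \<open>\<H>\<^sub>p\<^sub>o\<^sub>s\<close>.\<close>

lemma finite_vars: "finite (vars t)"
  by (induction t) auto

lemma subst_subst: "t \<cdot> \<sigma> \<cdot> \<tau> = t \<cdot> (\<lambda>y. \<sigma> y \<cdot> \<tau>)"
  by (induction t) auto

lemma vars_subst: "vars (t \<cdot> \<sigma>) = (\<Union>y\<in>vars t. vars (\<sigma> y))"
  by (induction t) auto

lemma subst_apply_id: "(\<And>y. y \<in> vars t \<Longrightarrow> \<sigma> y = Var y) \<Longrightarrow> t \<cdot> \<sigma> = t"
  by (induction t) (auto intro: map_idI)

lemma vars_subt_at: "subt_at s p = Some u \<Longrightarrow> vars u \<subseteq> vars s"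
proof (induction s p rule: subt_at.induct)
  case (3 f ts i p)
  then show ?case by (auto split: if_splits dest!: nth_mem)
qed auto

lemma finite_vars_set: "finite Bs \<Longrightarrow> finite (vars_set Bs)"
  by (simp add: vars_set_def finite_vars)

lemma vars_subset_vars_set: "B \<in> Bs \<Longrightarrow> vars B \<subseteq> vars_set Bs"
  by (auto simp: vars_set_def)

lemma dp_in_vars: "dp_in Bs u v \<Longrightarrow> vars u \<subseteq> vars_set Bs \<and> vars v \<subseteq> vars_set Bs"
  unfolding dp_in_def disagreement_pair_def vars_set_def
  by (fastforce dest!: vars_subt_at)

lemma vars_set_eliminate:
  assumes "vars t \<subseteq> vars_set Bs" "x \<notin> vars t"
  shows "vars_set ((\<lambda>s. s \<cdot> Var(x := t)) ` Bs) \<subseteq> vars_set Bs - {x}"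
  using assms unfolding vars_set_def by (fastforce simp: vars_subst split: if_splits)

lemma mus_step2_elim:
  assumes "mus_step2 U Bs Bs'"
  obtains x t where "x \<in> vars_set Bs" "vars t \<subseteq> vars_set Bs" "x \<notin> vars t"
    "Bs' = (\<lambda>s. s \<cdot> Var(x := t)) ` Bs"
proof -
  obtain x t where vp: "var_pair U Bs x t" and Bs': "Bs' = (\<lambda>s. s \<cdot> Var(x := t)) ` Bs"
    using assms unfolding mus_step2_def by blast
  have "x \<in> vars_set Bs" "vars t \<subseteq> vars_set Bs"
    using vp unfolding var_pair_def by (auto dest: dp_in_vars)
  moreover have "x \<notin> vars t"
    using vp unfolding var_pair_def simple_dp_def by auto
  ultimately show thesis
    using Bs' by (rule that)
qed

lemma mus_step2_vars_set_psubset: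
  assumes "mus_step2 U Bs Bs'"
  shows "vars_set Bs' \<subset> vars_set Bs"
proof -
  obtain x t where x: "x \<in> vars_set Bs" and t: "vars t \<subseteq> vars_set Bs" "x \<notin> vars t"
    and Bs': "Bs' = (\<lambda>s. s \<cdot> Var(x := t)) ` Bs"
    using assms by (rule mus_step2_elim)
  have "vars_set Bs' \<subseteq> vars_set Bs - {x}"
    unfolding Bs' using t by (intro vars_set_eliminate)
  with x show ?thesis
    by blast
qed

lemma mus_step2_finite:
  assumes "mus_step2 U Bs Bs'" "finite Bs"
  shows "finite Bs'"
proof -
  obtain x t where "Bs' = (\<lambda>s. s \<cdot> Var(x := t)) ` Bs"
    using assms(1) by (rule mus_step2_elim)
  with assms(2) show ?thesis
    by simp
qed

lemma mus_step2_no_infinite_chain: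
  fixes f :: "nat \<Rightarrow> ('f, 'v) trm set"
  assumes "finite (f 0)"
  shows "\<not> (\<forall>i. mus_step2 U (f i) (f (Suc i)))"
proof
  assume chain: "\<forall>i. mus_step2 U (f i) (f (Suc i))"
  have fin: "finite (f i)" for i
  proof (induction i)
    case 0
    show ?case by (fact assms)
  next
    case (Suc i)
    show ?case using mus_step2_finite[OF chain[rule_format] Suc.IH] .
  qed
  let ?r = "{(Bs', Bs). finite Bs \<and> mus_step2 U Bs Bs'}"
  have "?r \<subseteq> measure (\<lambda>Bs. card (vars_set Bs))"
  proof (rule subrelI)
    fix Bs' Bs
    assume "(Bs', Bs) \<in> ?r"
    then have "vars_set Bs' \<subset> vars_set Bs" "finite (vars_set Bs)"
      by (auto dest: mus_step2_vars_set_psubset intro: finite_vars_set)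
    then show "(Bs', Bs) \<in> measure (\<lambda>Bs. card (vars_set Bs))"
      by (simp add: psubset_card_mono)
  qed
  then have "wf ?r"
    using wf_subset by blast
  then obtain k where "(f (Suc k), f k) \<notin> ?r"
    by (rule wf_no_infinite_down_chainE)
  then show False
    using fin chain by simp
qed

definition unifies_fixing :: "('f, 'v) trm set \<Rightarrow> ('f, 'v) trm \<Rightarrow> bool" where
  "unifies_fixing Bs A' \<longleftrightarrow> (\<exists>B\<in>Bs. \<exists>\<theta>. A' \<cdot> \<theta> = B \<cdot> \<theta> \<and> vars_set Bs \<inter> subst_dom \<theta> = {})"

lemma unifies_fixing_member: "A' \<in> Bs \<Longrightarrow> unifies_fixing Bs A'"
  unfolding unifies_fixing_def by (intro bexI exI[of _ Var]) (auto simp: subst_dom_def)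

lemma unifies_fixing_subst:
  assumes "unifies_fixing Bs A'"
    and new_vars: "vars_set ((\<lambda>s. s \<cdot> \<sigma>) ` Bs) \<subseteq> vars_set Bs"
    and idem: "\<And>y. y \<in> vars_set ((\<lambda>s. s \<cdot> \<sigma>) ` Bs) \<Longrightarrow> \<sigma> y = Var y"
  shows "unifies_fixing ((\<lambda>s. s \<cdot> \<sigma>) ` Bs) A'"
proof -
  let ?Bs' = "(\<lambda>s. s \<cdot> \<sigma>) ` Bs"
  obtain B \<theta> where B: "B \<in> Bs" and unif: "A' \<cdot> \<theta> = B \<cdot> \<theta>"
    and fix_Bs: "vars_set Bs \<inter> subst_dom \<theta> = {}"
    using assms(1) unfolding unifies_fixing_def by blast
  define \<theta>' where "\<theta>' = (\<lambda>y. \<theta> y \<cdot> \<sigma>)"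
  have \<theta>_id: "\<theta> y = Var y" if "y \<in> vars_set Bs" for y
    using that fix_Bs by (auto simp: subst_dom_def)
  have \<theta>'_id: "\<theta>' y = Var y" if "y \<in> vars_set ?Bs'" for y
  proof -
    have "\<theta> y = Var y"
      using that new_vars by (intro \<theta>_id) blast
    then show ?thesis
      using idem[OF that] by (simp add: \<theta>'_def)
  qed
  have B\<sigma>: "B \<cdot> \<sigma> \<in> ?Bs'"
    using B by blast
  have "B \<cdot> \<theta> = B"
    using vars_subset_vars_set[OF B] by (intro subst_apply_id \<theta>_id) blast
  then have "A' \<cdot> \<theta>' = B \<cdot> \<sigma>"
    using unif by (simp add: \<theta>'_def subst_subst[symmetric])
  also have "\<dots> = B \<cdot> \<sigma> \<cdot> \<theta>'"
    using vars_subset_vars_set[OF B\<sigma>] by (intro subst_apply_id[symmetric] \<theta>'_id) blast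
  finally have "A' \<cdot> \<theta>' = B \<cdot> \<sigma> \<cdot> \<theta>'" .
  moreover have "vars_set ?Bs' \<inter> subst_dom \<theta>' = {}"
    using \<theta>'_id by (auto simp: subst_dom_def)
  ultimately show ?thesis
    unfolding unifies_fixing_def by (intro bexI[OF _ B\<sigma>] exI[of _ \<theta>'] conjI)
qed

lemma mus_step2_unifies_fixing:
  assumes "mus_step2 U Bs Bs'" "unifies_fixing Bs A'"
  shows "unifies_fixing Bs' A'"
proof -
  obtain x t where t: "vars t \<subseteq> vars_set Bs" "x \<notin> vars t"
    and Bs': "Bs' = (\<lambda>s. s \<cdot> Var(x := t)) ` Bs"
    using assms(1) by (rule mus_step2_elim)
  have "vars_set Bs' \<subseteq> vars_set Bs - {x}"
    unfolding Bs' using t by (intro vars_set_eliminate)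
  then show ?thesis
    unfolding Bs' using assms(2) by (intro unifies_fixing_subst) auto
qed

lemma mus_step2_rtranclp_unifies_fixing:
  assumes "(mus_step2 U)\<^sup>*\<^sup>* Bs\<^sub>0 Bs" "A' \<in> Bs\<^sub>0"
  shows "unifies_fixing Bs A'"
  using assms(1)
proof (induction rule: rtranclp_induct)
  case base
  show ?case using assms(2) by (rule unifies_fixing_member)
next
  case (step Bs Bs')
  from step.hyps(2) step.IH show ?case by (rule mus_step2_unifies_fixing)
qed

theorem mainTheorem6:
  fixes U :: "'v set" and A :: "('f, 'v) trm" and H :: "('f, 'v) trm set"
  assumes "infinite U"
    and "finite H"
    and "vars_set (insert A H) \<inter> U = {}"
    and "\<forall>B\<in>H. \<exists>\<sigma>. A \<cdot> \<sigma> = B \<cdot> \<sigma>"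
  shows "\<not> (\<exists>f. f 0 = insert A H \<and> (\<forall>i. mus_step2 U (f i) (f (Suc i))))
    \<and> (\<forall>Bs. (mus_step2 U)\<^sup>*\<^sup>* (insert A H) Bs \<longrightarrow>
          (\<forall>A'\<in>insert A H. \<exists>B\<in>Bs. \<exists>\<theta>. A' \<cdot> \<theta> = B \<cdot> \<theta> \<and> vars_set Bs \<inter> subst_dom \<theta> = {}))"
proof
  show "\<not> (\<exists>f. f 0 = insert A H \<and> (\<forall>i. mus_step2 U (f i) (f (Suc i))))"
    using mus_step2_no_infinite_chain \<open>finite H\<close> by (metis finite_insert)
  show "\<forall>Bs. (mus_step2 U)\<^sup>*\<^sup>* (insert A H) Bs \<longrightarrow>
      (\<forall>A'\<in>insert A H. \<exists>B\<in>Bs. \<exists>\<theta>. A' \<cdot> \<theta> = B \<cdot> \<theta> \<and> vars_set Bs \<inter> subst_dom \<theta> = {})"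
    using mus_step2_rtranclp_unifies_fixing unfolding unifies_fixing_def by blast
qed

end
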